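(* In $\mathcal H_{P,R}$ and $\mathcal H_{Fr}$, for every $n\ge1$: $$\tilde\Delta(v_n)=\sum_{k=1}^{n-1}\sum_{l>0}\binom{2n-2k+l-2}{l}\Big(\sum_{\substack{a_1+\cdots+a_l=k\\ a_i>0}}v_{a_1}\cdots v_{a_l}\Big)\otimes v_{n-k},$$ $$\tilde\Delta_{Fr}(v_n)=\sum_{k=1}^{n-1}\sum_{l>0}\binom{n-k+l-2}{l}\Big(\sum_{\substack{a_1+\cdots+a_l=k\\ a_i>0}}v_{a_1}\cdots v_{a_l}\Big)\otimes v_{n-k},$$ $$\tilde\Delta(u_n)=\sum_{k=1}^{n-1}\sum_{l>0}\binom{2n-2k+l}{l}\Big(\sum_{\substack{a_1+\cdots+a_l=k\\ a_i>0}}v_{a_1}\cdots v_{a_l}\Big)\otimes u_{n-k},$$ $$\tilde\Delta_{Fr}(u_n)=\sum_{k=1}^{n-1}\sum_{l>0}\binom{n-k+l}{l}\Big(\sum_{\substack{a_1+\cdots+a_l=k\\ a_i>0}}v_{a_1}\cdots v_{a_l}\Big)\otimes u_{n-k}.$$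
   Context: Planar rooted trees are finite trees with a root, embedded in the plane, edges oriented away from the root (undecorated). $\mathcal H_{P,R}$ is the free associative unital $\mathbb Q$-algebra on planar rooted trees; its basis is the set of planar forests $t_1\cdots t_n$ ($1$ = empty forest), and the weight of a forest is its number of vertices. Its coproduct is $\Delta(F)=\sum_cP^c(F)\otimes R^c(F)$ over tuples $c=(c_i)$ where each $c_i$ is the empty cut of $t_i$ ($P=1,R=t_i$), the total cut ($P=t_i,R=1$), or an admissible cut of $t_i$ (a nonempty set of edges such that every oriented path meets at most one of them; $R^{c_i}(t_i)$ is the component of the root, $P^{c_i}(t_i)$ the left-to-right planar forest of the other components), $P^c(F)=\prod P^{c_i}(t_i)$, $R^c(F)=\prod R^{c_i}(t_i)$. $\mathcal H_{Fr}$ is the same algebra with coproduct $\Delta_{Fr}(F)=\sum_cP^c(F)\otimes R^c(F)$ where each $c_i$ is the empty cut, the total cut, or an admissible cut of $t_i$ containing no left edge (an edge is left if it is the leftmost among the edges with the same origin). For a coproduct $\delta$, $\tilde\delta(x)=\delta(x)-x\otimes1-1\otimes x$. For $n\ge1$, $u_n$ is the sum of all planar forests of weight $n$ and $v_n$ the sum of all planar rooted trees of weight $n$. *)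

theory Defs
  imports Complex_Main "HOL-Library.Function_Algebras"
begin

datatype ptree = Node "ptree list"

type_synonym forest = "ptree list"

fun tw :: "ptree \<Rightarrow> nat" where
  "tw (Node ts) = Suc (sum_list (map tw ts))"

definition fw :: "forest \<Rightarrow> nat" where
  "fw F = sum_list (map tw F)"

text \<open>cuts fr t lists, with multiplicity, the pairs (P, R) over the empty cut and all
admissible cuts of t (the component of the root is R, the other components form the
left-to-right forest P). If fr is True, left edges (edge to the first child) may not be
cut (the Foissy-type coproduct of H_Fr).\<close>

fun cuts :: "bool \<Rightarrow> ptree \<Rightarrow> (forest \<times> ptree) list" where
  "cuts fr (Node ts) =
     map (\<lambda>cs. (concat (map fst cs), Node (concat (map snd cs))))
       (product_lists
         (case ts of [] \<Rightarrow> []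
          | s # ss \<Rightarrow>
             ((if fr then [] else [([s], [])]) @ map (\<lambda>pr. (fst pr, [snd pr])) (cuts fr s))
             # map (\<lambda>s'. [([s'], [])] @ map (\<lambda>pr. (fst pr, [snd pr])) (cuts fr s')) ss))"

text \<open>Coproduct of a tree: total cut, plus empty and admissible cuts.\<close>
definition tcop :: "bool \<Rightarrow> ptree \<Rightarrow> (forest \<times> forest) list" where
  "tcop fr t = ([t], []) # map (\<lambda>pr. (fst pr, [snd pr])) (cuts fr t)"

definition fcop :: "bool \<Rightarrow> forest \<Rightarrow> (forest \<times> forest) list" where
  "fcop fr F = map (\<lambda>cs. (concat (map fst cs), concat (map snd cs)))
                   (product_lists (map (tcop fr) F))"

type_synonym H = "forest \<Rightarrow> rat"
type_synonym HH = "forest \<times> forest \<Rightarrow> rat"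

definition basis :: "forest \<Rightarrow> H" where
  "basis F = (\<lambda>G. if G = F then 1 else 0)"

definition hmult :: "H \<Rightarrow> H \<Rightarrow> H" where
  "hmult x y = (\<lambda>F. \<Sum>i\<le>length F. x (take i F) * y (drop i F))"

definition hprod :: "H list \<Rightarrow> H" where
  "hprod xs = foldr hmult xs (basis [])"

definition tens :: "H \<Rightarrow> H \<Rightarrow> HH" where
  "tens x y = (\<lambda>(a, b). x a * y b)"

definition smult :: "rat \<Rightarrow> HH \<Rightarrow> HH" where
  "smult c z = (\<lambda>p. c * z p)"

text \<open>Linear extension of the coproduct (fr = False: H_PR, fr = True: H_Fr);
elements are assumed finitely supported.\<close>
definition cop :: "bool \<Rightarrow> H \<Rightarrow> HH" where
  "cop fr x = (\<lambda>p. \<Sum>F\<in>{F. x F \<noteq> 0}. x F * of_nat (count_list (fcop fr F) p))"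

definition rcop :: "bool \<Rightarrow> H \<Rightarrow> HH" where
  "rcop fr x = cop fr x - tens x (basis []) - tens (basis []) x"

definition vv :: "nat \<Rightarrow> H" where
  "vv n = (\<lambda>F. if (\<exists>t. F = [t] \<and> tw t = n) then 1 else 0)"

definition uu :: "nat \<Rightarrow> H" where
  "uu n = (\<lambda>F. if fw F = n then 1 else 0)"

definition compsum :: "nat \<Rightarrow> nat \<Rightarrow> H" where
  "compsum k l = (\<Sum>as\<in>{as. length as = l \<and> sum_list as = k \<and> (\<forall>a\<in>set as. 0 < a)}.
                     hprod (map vv as))"

end

theory Submission
  imports Defs "HOL-Computational_Algebra.Formal_Power_Series"
begin

(* The coefficient of P \<otimes> R in \<Delta>(u_n) counts the cuts of forests of weight n with
   result (P, R). Read backwards, a cut grafts the l trees of P, in their planar order, onto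
   R at a weakly increasing sequence of slots, so the coefficient is the multiset number
   C(s + l - 1, l), where s is the number of slots of R: 2w + 1 for a forest of weight w,
   and w + 1 for H_Fr, where a grafted tree may not become a leftmost child (a tree of weight
   w has 2w - 1, resp. w - 1 slots). The count is proved by induction on the weight,
   splitting off the first tree of the forest: distributing P between that tree and the rest
   is the Chu-Vandermonde identity for multiset numbers, and cutting the tree off entirely
   adds the Pascal term. For v_n the root component is a single tree. Dropping the primitive
   terms x \<otimes> 1 and 1 \<otimes> x and grouping P by weight k and length l gives the
   statement, because compsum k l is the sum of all forests of weight k with l trees. *)

lemma tw_pos: "0 < tw t"
  by (cases t) auto

lemma fw_Nil [simp]: "fw [] = 0"
  and fw_Cons [simp]: "fw (t # F) = tw t + fw F"
  and fw_append [simp]: "fw (F @ G) = fw F + fw G"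
  by (simp_all add: fw_def)

lemma fw_eq_0_iff [simp]: "fw F = 0 \<longleftrightarrow> F = []"
  and fw_pos_iff [simp]: "0 < fw F \<longleftrightarrow> F \<noteq> []"
  using tw_pos by (cases F; auto)+

lemma length_le_fw: "length F \<le> fw F"
proof (induction F)
  case (Cons t F)
  then show ?case using tw_pos[of t] by simp
qed simp

definition trees_of_weight :: "nat \<Rightarrow> ptree set" where
  "trees_of_weight n = {t. tw t = n}"

definition forests_of_weight :: "nat \<Rightarrow> forest set" where
  "forests_of_weight n = {F. fw F = n}"

lemma trees_of_weight_0: "trees_of_weight 0 = {}"
  using tw_pos by (force simp: trees_of_weight_def)

lemma trees_of_weight_Suc: "trees_of_weight (Suc n) = Node ` forests_of_weight n"
proof -
  have "t \<in> Node ` forests_of_weight n" if "tw t = Suc n" for t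
    using that by (cases t) (auto simp: forests_of_weight_def fw_def)
  then show ?thesis
    by (auto simp: trees_of_weight_def forests_of_weight_def fw_def)
qed

lemma forests_of_weight_0: "forests_of_weight 0 = {[]}"
  by (auto simp: forests_of_weight_def)

lemma forests_of_weight_pos:
  assumes "0 < n"
  shows "forests_of_weight n =
    (\<Union>a\<in>{1..n}. (\<lambda>(t, F). t # F) ` (trees_of_weight a \<times> forests_of_weight (n - a)))"
proof (intro equalityI subsetI)
  fix G assume G: "G \<in> forests_of_weight n"
  with assms obtain t F where "G = t # F"
    by (cases G) (auto simp: forests_of_weight_def)
  with G tw_pos[of t] show "G \<in> (\<Union>a\<in>{1..n}. (\<lambda>(t, F). t # F) ` (trees_of_weight a \<times> forests_of_weight (n - a)))"
    by (auto simp: forests_of_weight_def trees_of_weight_def Suc_le_eq intro!: bexI[of _ "tw t"])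
qed (auto simp: forests_of_weight_def trees_of_weight_def)

lemma finite_forests_of_weight: "finite (forests_of_weight n)"
proof (induction n rule: less_induct)
  case (less n)
  show ?case
  proof (cases n)
    case 0
    then show ?thesis by (simp add: forests_of_weight_0)
  next
    case (Suc m)
    have "finite (trees_of_weight a)" if "a \<in> {1..n}" for a
      using that less by (cases a) (auto simp: trees_of_weight_Suc)
    then show ?thesis
      using less by (simp add: forests_of_weight_pos Suc)
  qed
qed

lemma finite_trees_of_weight: "finite (trees_of_weight n)"
  by (cases n) (simp_all add: trees_of_weight_0 trees_of_weight_Suc finite_forests_of_weight)

lemma sum_forests_of_weight_pos:
  assumes "0 < n"
  shows "(\<Sum>G\<in>forests_of_weight n. f G) =
    (\<Sum>a\<in>{1..n}. \<Sum>t\<in>trees_of_weight a. \<Sum>F\<in>forests_of_weight (n - a). f (t # F))"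
proof -
  have "(\<Sum>G\<in>forests_of_weight n. f G) =
      (\<Sum>a\<in>{1..n}. sum f ((\<lambda>(t, F). t # F) ` (trees_of_weight a \<times> forests_of_weight (n - a))))"
    unfolding forests_of_weight_pos[OF assms]
    by (rule sum.UNION_disjoint)
      (simp_all add: finite_trees_of_weight finite_forests_of_weight, auto simp: trees_of_weight_def)
  also have "\<dots> = (\<Sum>a\<in>{1..n}. \<Sum>(t, F)\<in>trees_of_weight a \<times> forests_of_weight (n - a). f (t # F))"
    by (intro sum.cong refl, subst sum.reindex) (auto simp: inj_on_def split_def)
  finally show ?thesis
    by (simp add: sum.cartesian_product)
qed

definition concat_pairs :: "('a list \<times> 'b list) list \<Rightarrow> 'a list \<times> 'b list" where
  "concat_pairs cs = (concat (map fst cs), concat (map snd cs))"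

definition append_pairs ::
    "('a list \<times> 'b list) multiset \<Rightarrow> ('a list \<times> 'b list) multiset \<Rightarrow> ('a list \<times> 'b list) multiset" where
  "append_pairs M N = (\<Sum>x\<in>#M. image_mset (\<lambda>y. (fst x @ fst y, snd x @ snd y)) N)"

lemma concat_pairs_Nil [simp]: "concat_pairs [] = ([], [])"
  and concat_pairs_Cons [simp]:
    "concat_pairs (x # cs) = (fst x @ fst (concat_pairs cs), snd x @ snd (concat_pairs cs))"
  by (simp_all add: concat_pairs_def)

lemma append_pairs_add_left [simp]: "append_pairs (M + M') N = append_pairs M N + append_pairs M' N"
  and append_pairs_add_right [simp]: "append_pairs M (N + N') = append_pairs M N + append_pairs M N'"
  and append_pairs_empty_left [simp]: "append_pairs {#} N = {#}"
  and append_pairs_empty_right [simp]: "append_pairs M {#} = {#}"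
  by (simp_all add: append_pairs_def sum_mset.distrib)

lemma append_pairs_sum_left: "append_pairs (\<Sum>i\<in>I. M i) N = (\<Sum>i\<in>I. append_pairs (M i) N)"
  and append_pairs_sum_right: "append_pairs K (\<Sum>i\<in>I. L i) = (\<Sum>i\<in>I. append_pairs K (L i))"
  by (induction I rule: infinite_finite_induct) simp_all

lemma mset_concat_pairs_product_lists_Cons:
  "mset (map concat_pairs (product_lists (xs # xss))) =
     append_pairs (mset xs) (mset (map concat_pairs (product_lists xss)))"
proof (induction xs)
  case (Cons x xs)
  have "mset (map (\<lambda>cs. concat_pairs (x # cs)) (product_lists xss)) =
      image_mset (\<lambda>y. (fst x @ fst y, snd x @ snd y)) (mset (map concat_pairs (product_lists xss)))"
    by (simp add: multiset.map_comp comp_def)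
  with Cons show ?case
    by (simp del: concat_pairs_Cons add: comp_def append_pairs_def)
qed (simp add: append_pairs_def)

lemma count_image_mset_prepend:
  "count (image_mset (\<lambda>y. (a @ fst y, b @ snd y)) N) (P, R) =
    (if take (length a) P = a \<and> take (length b) R = b
     then count N (drop (length a) P, drop (length b) R) else 0)"
proof (induction N)
  case (add y N)
  have "(a @ fst y, b @ snd y) = (P, R) \<longleftrightarrow>
      take (length a) P = a \<and> take (length b) R = b \<and> y = (drop (length a) P, drop (length b) R)"
    by (cases y) (auto simp: append_eq_conv_conj)
  with add show ?case by auto
qed simp

lemma count_append_pairs_singleton_fst:
  "count (append_pairs (image_mset (\<lambda>s. ([s], [])) S) N) (P, R) =
     (case P of [] \<Rightarrow> 0 | p # P' \<Rightarrow> count S p * count N (P', R))"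
proof (induction S)
  case (add s S)
  have "count (image_mset (\<lambda>y. ([s] @ fst y, [] @ snd y)) N) (P, R) =
      (case P of [] \<Rightarrow> 0 | p # P' \<Rightarrow> if p = s then count N (P', R) else 0)"
    unfolding count_image_mset_prepend by (auto split: list.split)
  with add show ?case
    by (auto simp: append_pairs_def split: list.split)
qed (simp add: append_pairs_def split: list.split)

lemma count_append_pairs_singleton_snd:
  "count (append_pairs (image_mset (\<lambda>(Q, r). (Q, [r])) A) N) (P, R) =
     (case R of [] \<Rightarrow> 0
      | r # R' \<Rightarrow> \<Sum>i\<le>length P. count A (take i P, r) * count N (drop i P, R'))"
proof (induction A)
  case (add x A)
  obtain Q r0 where x: "x = (Q, r0)" by (cases x)
  have split_x: "(\<Sum>i\<le>length P. count (add_mset x A) (take i P, r) * count N (drop i P, R')) =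
      (if take (length Q) P = Q \<and> r = r0 then count N (drop (length Q) P, R') else 0) +
      (\<Sum>i\<le>length P. count A (take i P, r) * count N (drop i P, R'))" for r R'
  proof -
    have "count (add_mset x A) (take i P, r) * count N (drop i P, R') =
        (if i = length Q \<and> take (length Q) P = Q \<and> r = r0 then count N (drop i P, R') else 0) +
        count A (take i P, r) * count N (drop i P, R')"
      if "i \<le> length P" for i
      using that by (auto simp: x)
    then have "(\<Sum>i\<le>length P. count (add_mset x A) (take i P, r) * count N (drop i P, R')) =
        (\<Sum>i\<le>length P. if i = length Q \<and> take (length Q) P = Q \<and> r = r0 then count N (drop i P, R') else 0) +
        (\<Sum>i\<le>length P. count A (take i P, r) * count N (drop i P, R'))"
      by (simp add: sum.distrib)
    also have "(\<Sum>i\<le>length P. if i = length Q \<and> take (length Q) P = Q \<and> r = r0 then count N (drop i P, R') else 0) =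
        (if take (length Q) P = Q \<and> r = r0 then count N (drop (length Q) P, R') else 0)"
      by (auto simp: sum.delta')
    finally show ?thesis .
  qed
  have "count (image_mset (\<lambda>y. (Q @ fst y, [r0] @ snd y)) N) (P, R) =
      (case R of [] \<Rightarrow> 0
       | r # R' \<Rightarrow> if take (length Q) P = Q \<and> r = r0 then count N (drop (length Q) P, R') else 0)"
    unfolding count_image_mset_prepend by (auto split: list.split)
  with add split_x show ?case
    by (auto simp: append_pairs_def x split: list.split)
qed (simp add: append_pairs_def split: list.split)


section \<open>Multiset numbers\<close>

definition multichoose :: "nat \<Rightarrow> nat \<Rightarrow> nat" where
  "multichoose a l = (a + l - 1) choose l"

lemma multichoose_0_right [simp]: "multichoose a 0 = 1"
  and multichoose_1_left [simp]: "multichoose (Suc 0) l = 1"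
  and multichoose_0_Suc [simp]: "multichoose 0 (Suc l) = 0"
  by (simp_all add: multichoose_def)

lemma multichoose_Pascal:
  assumes "0 < a" "0 < l"
  shows "multichoose (a - 1) l + multichoose a (l - 1) = multichoose a l"
  using assms by (cases a; cases l) (simp_all add: multichoose_def)

lemma of_nat_multichoose:
  "(of_nat (multichoose a l) :: 'a :: field_char_0) = (-1) ^ l * ((- of_nat a) gchoose l)"
proof -
  have "(of_nat (multichoose a l) :: 'a) = (of_nat a + of_nat l - 1) gchoose l"
  proof (cases "a + l = 0")
    case False
    then have "(of_nat (a + l - 1) :: 'a) = of_nat a + of_nat l - 1"
      by (subst of_nat_diff) auto
    then show ?thesis
      by (simp add: multichoose_def binomial_gbinomial)
  qed (simp add: multichoose_def)
  also have "\<dots> = (-1) ^ l * ((- of_nat a) gchoose l)"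
    by (simp add: gbinomial_negated_upper[of "- of_nat a"] algebra_simps flip: power_add mult.assoc)
  finally show ?thesis .
qed

lemma multichoose_Vandermonde:
  "(\<Sum>i\<le>l. multichoose a i * multichoose b (l - i)) = multichoose (a + b) l"
proof -
  have summand: "(of_nat (multichoose a i * multichoose b (l - i)) :: rat) =
      (-1) ^ l * (((- of_nat a) gchoose i) * ((- of_nat b) gchoose (l - i)))" if "i \<le> l" for i
  proof -
    have "(-1 :: rat) ^ l = (-1) ^ i * (-1) ^ (l - i)"
      using that by (simp flip: power_add)
    then show ?thesis
      by (simp only: of_nat_mult of_nat_multichoose ac_simps)
  qed
  have "(of_nat (\<Sum>i\<le>l. multichoose a i * multichoose b (l - i)) :: rat) =
      (\<Sum>i\<le>l. (-1) ^ l * (((- of_nat a) gchoose i) * ((- of_nat b) gchoose (l - i))))"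
    unfolding of_nat_sum by (rule sum.cong[OF refl], rule summand) simp
  also have "\<dots> = (-1) ^ l * (\<Sum>i\<le>l. ((- of_nat a) gchoose i) * ((- of_nat b) gchoose (l - i)))"
    by (simp only: sum_distrib_left)
  also have "\<dots> = of_nat (multichoose (a + b) l)"
    by (simp add: gbinomial_Vandermonde[unfolded atLeast0AtMost] of_nat_multichoose add_ac)
  finally show ?thesis
    by (simp only: of_nat_eq_iff)
qed

text \<open>The ways to cut a child \<open>s\<close> of a vertex: cut the edge above \<open>s\<close> (not allowed in
  H_Fr when \<open>s\<close> is the leftmost child) or cut inside \<open>s\<close>.\<close>

definition choices :: "bool \<Rightarrow> bool \<Rightarrow> ptree \<Rightarrow> (forest \<times> forest) list" where
  "choices fr leftmost s =
     (if fr \<and> leftmost then [] else [([s], [])]) @ map (\<lambda>(Q, r). (Q, [r])) (cuts fr s)"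

fun choices_list :: "bool \<Rightarrow> bool \<Rightarrow> forest \<Rightarrow> (forest \<times> forest) list list" where
  "choices_list fr leftmost [] = []"
| "choices_list fr leftmost (s # F) = choices fr leftmost s # map (choices fr False) F"

lemma choices_list_False: "choices_list fr False F = map (choices fr False) F"
  by (cases F) simp_all

lemma cuts_Node:
  "cuts fr (Node F) = map (apsnd Node \<circ> concat_pairs) (product_lists (choices_list fr True F))"
proof -
  have root: "(\<lambda>cs. (concat (map fst cs), Node (concat (map snd cs)))) = apsnd Node \<circ> concat_pairs"
    by (simp add: fun_eq_iff concat_pairs_def)
  have inner: "choices fr False = (\<lambda>s. [([s], [])] @ map (\<lambda>pr. (fst pr, [snd pr])) (cuts fr s))"
    by (simp add: fun_eq_iff choices_def split_def)
  show ?thesis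
    unfolding cuts.simps root
    by (cases F) (simp_all only: choices_list.simps inner list.case, simp add: choices_def split_def)
qed

lemma fcop_eq: "fcop fr F = map concat_pairs (product_lists (choices_list fr False F))"
proof -
  have "tcop fr = choices fr False"
    by (simp add: fun_eq_iff tcop_def choices_def split_def)
  then show ?thesis
    by (simp add: fcop_def choices_list_False concat_pairs_def)
qed

definition tree_cuts :: "bool \<Rightarrow> nat \<Rightarrow> (forest \<times> ptree) multiset" where
  "tree_cuts fr n = (\<Sum>t\<in>trees_of_weight n. mset (cuts fr t))"

definition forest_cuts :: "bool \<Rightarrow> bool \<Rightarrow> nat \<Rightarrow> (forest \<times> forest) multiset" where
  "forest_cuts fr leftmost n =
     (\<Sum>F\<in>forests_of_weight n. mset (map concat_pairs (product_lists (choices_list fr leftmost F))))"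

definition choices_of_weight :: "bool \<Rightarrow> bool \<Rightarrow> nat \<Rightarrow> (forest \<times> forest) multiset" where
  "choices_of_weight fr leftmost n = (\<Sum>s\<in>trees_of_weight n. mset (choices fr leftmost s))"

lemma image_mset_sum: "image_mset f (\<Sum>i\<in>I. M i) = (\<Sum>i\<in>I. image_mset f (M i))"
  by (induction I rule: infinite_finite_induct) simp_all

lemma tree_cuts_0: "tree_cuts fr 0 = {#}"
  by (simp add: tree_cuts_def trees_of_weight_0)

lemma count_tree_cuts_Suc:
  "count (tree_cuts fr (Suc n)) (Q, Node F) = count (forest_cuts fr True n) (Q, F)"
proof -
  have "tree_cuts fr (Suc n) = (\<Sum>F\<in>forests_of_weight n. mset (cuts fr (Node F)))"
    unfolding tree_cuts_def trees_of_weight_Suc by (subst sum.reindex) (auto simp: inj_on_def)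
  also have "\<dots> = image_mset (apsnd Node) (forest_cuts fr True n)"
    by (simp add: cuts_Node forest_cuts_def image_mset_sum multiset.map_comp del: cuts.simps)
  finally have "tree_cuts fr (Suc n) = image_mset (apsnd Node) (forest_cuts fr True n)" .
  moreover have "apsnd Node -` {(Q, Node F)} = {(Q, F)}"
    by auto
  ultimately show ?thesis
    by (simp add: count_image_mset Int_insert_left not_in_iff)
qed

lemma forest_cuts_0: "forest_cuts fr leftmost 0 = {#([], [])#}"
  by (simp add: forest_cuts_def forests_of_weight_0)

lemma choices_of_weight_eq:
  "choices_of_weight fr leftmost n =
     (if fr \<and> leftmost then {#} else image_mset (\<lambda>s. ([s], [])) (mset_set (trees_of_weight n))) +
     image_mset (\<lambda>(Q, r). (Q, [r])) (tree_cuts fr n)"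
proof (cases "fr \<and> leftmost")
  case True
  then show ?thesis
    by (simp add: choices_of_weight_def choices_def tree_cuts_def image_mset_sum)
next
  case False
  then have choices: "mset (choices fr leftmost s) =
      {#([s], [])#} + image_mset (\<lambda>(Q, r). (Q, [r])) (mset (cuts fr s))" for s
    by (simp add: choices_def)
  have singletons: "(\<Sum>s\<in>A. {#([s], [])#}) = image_mset (\<lambda>s. ([s], [])) (mset_set A)" for A
    by (induction A rule: infinite_finite_induct) simp_all
  show ?thesis
    unfolding choices_of_weight_def choices sum.distrib singletons
    using False by (auto simp: tree_cuts_def image_mset_sum)
qed

lemma forest_cuts_pos:
  assumes "0 < n"
  shows "forest_cuts fr leftmost n =
    (\<Sum>a\<in>{1..n}. append_pairs (choices_of_weight fr leftmost a) (forest_cuts fr False (n - a)))"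
proof -
  have "forest_cuts fr leftmost n = (\<Sum>a\<in>{1..n}. \<Sum>s\<in>trees_of_weight a.
      \<Sum>F\<in>forests_of_weight (n - a). append_pairs (mset (choices fr leftmost s))
        (mset (map concat_pairs (product_lists (choices_list fr False F)))))"
    unfolding forest_cuts_def sum_forests_of_weight_pos[OF assms] choices_list.simps
    by (simp only: mset_concat_pairs_product_lists_Cons choices_list_False)
  also have "\<dots> = (\<Sum>a\<in>{1..n}. \<Sum>s\<in>trees_of_weight a.
      append_pairs (mset (choices fr leftmost s)) (forest_cuts fr False (n - a)))"
    by (simp only: forest_cuts_def append_pairs_sum_right)
  finally show ?thesis
    by (simp only: choices_of_weight_def append_pairs_sum_left)
qed

lemma count_forest_cuts_pos:
  assumes "0 < n"
  shows "count (forest_cuts fr leftmost n) (P, R) =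
    (if fr \<and> leftmost then 0 else
       case P of [] \<Rightarrow> 0
       | p # P' \<Rightarrow> if tw p \<le> n then count (forest_cuts fr False (n - tw p)) (P', R) else 0) +
    (case R of [] \<Rightarrow> 0
     | r # R' \<Rightarrow> \<Sum>a\<in>{1..n}. \<Sum>i\<le>length P.
         count (tree_cuts fr a) (take i P, r) * count (forest_cuts fr False (n - a)) (drop i P, R'))"
proof -
  have "(\<Sum>a\<in>{1..n}. (if tw p = a then 1 else 0) * count (forest_cuts fr False (n - a)) (P', R)) =
      (if tw p \<le> n then count (forest_cuts fr False (n - tw p)) (P', R) else 0)" for p P'
    using tw_pos[of p] by (simp add: if_distrib[of "\<lambda>x. x * _"] sum.delta' cong: if_cong)
  then show ?thesis
    by (auto simp: forest_cuts_pos[OF assms] count_sum choices_of_weight_eq sum.distrib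
      count_append_pairs_singleton_fst count_append_pairs_singleton_snd count_mset_set'
      finite_trees_of_weight[unfolded trees_of_weight_def] trees_of_weight_def split: list.split)
qed

section \<open>Counting cuts\<close>

text \<open>The number of positions at which a tree can be grafted onto \<open>R\<close> (as a root of the
  forest or as a child of one of its vertices) so that the grafted edge may be cut.\<close>

definition forest_slots :: "bool \<Rightarrow> bool \<Rightarrow> forest \<Rightarrow> nat" where
  "forest_slots fr leftmost R = (if fr then fw R else 2 * fw R) + (if fr \<and> leftmost then 0 else 1)"

fun tree_slots :: "bool \<Rightarrow> ptree \<Rightarrow> nat" where
  "tree_slots fr (Node R) = forest_slots fr True R"

lemma tree_slots_eq: "tree_slots fr t = (if fr then tw t - 1 else 2 * tw t - 1)"
  by (cases t) (simp add: forest_slots_def fw_def)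

lemma forest_slots_Nil: "forest_slots fr leftmost [] = (if fr \<and> leftmost then 0 else 1)"
  by (simp add: forest_slots_def)

lemma forest_slots_Cons:
  "forest_slots fr leftmost (r # R) =
     (if fr \<and> leftmost then 0 else 1) + tree_slots fr r + forest_slots fr False R"
  by (cases r) (simp add: forest_slots_def fw_def)

lemma multichoose_forest_slots_Cons:
  assumes "l \<noteq> 0 \<or> R \<noteq> []"
  shows "(if fr \<and> leftmost \<or> l = 0 then 0 else multichoose (forest_slots fr False R) (l - 1)) +
      (case R of [] \<Rightarrow> 0 | r # R' \<Rightarrow> multichoose (tree_slots fr r + forest_slots fr False R') l) =
    multichoose (forest_slots fr leftmost R) l"
proof (cases "fr \<and> leftmost")
  case True
  with assms show ?thesis
    by (cases R) (auto simp: forest_slots_Nil forest_slots_Cons gr0_conv_Suc)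
next
  case False
  show ?thesis
  proof (cases R)
    case Nil
    with False assms show ?thesis
      by (auto simp: forest_slots_Nil)
  next
    case (Cons r R')
    define s where "s = forest_slots fr leftmost R"
    have "forest_slots fr False R = s" "tree_slots fr r + forest_slots fr False R' = s - 1" "0 < s"
      using False tw_pos[of r] by (auto simp: s_def forest_slots_def Cons forest_slots_Cons tree_slots_eq)
    with False Cons multichoose_Pascal[of s l] show ?thesis
      by (cases "l = 0") (auto simp: s_def)
  qed
qed

lemma sum_count_cuts_inside_first_tree:
  assumes IH: "\<And>m leftmost Q S. m < n \<Longrightarrow> count (forest_cuts fr leftmost m) (Q, S) =
      (if fw Q + fw S = m then multichoose (forest_slots fr leftmost S) (length Q) else 0)"
  shows "(\<Sum>a\<in>{1..n}. \<Sum>i\<le>length P.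
      count (tree_cuts fr a) (take i P, r) * count (forest_cuts fr False (n - a)) (drop i P, R)) =
    (if fw P + tw r + fw R = n
     then multichoose (tree_slots fr r + forest_slots fr False R) (length P) else 0)"
proof -
  have tree: "count (tree_cuts fr a) (Q, r) =
      (if fw Q + tw r = a then multichoose (tree_slots fr r) (length Q) else 0)" if "a \<le> n" for a Q
  proof (cases a)
    case 0
    then show ?thesis using tw_pos[of r] by (simp add: tree_cuts_0)
  next
    case (Suc m)
    moreover obtain F where "r = Node F" by (cases r)
    ultimately show ?thesis
      using that IH[of m True Q F] by (simp add: count_tree_cuts_Suc fw_def)
  qed
  have forest: "count (forest_cuts fr False (n - a)) (Q, S) =
      (if fw Q + fw S = n - a then multichoose (forest_slots fr False S) (length Q) else 0)"
    if "a \<in> {1..n}" for a Q S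
    using that IH[of "n - a"] by simp
  have collapse: "(\<Sum>a\<in>{1..n}. (if fw (take i P) + tw r = a then x else 0) *
      (if fw (drop i P) + fw R = n - a then y else 0)) =
    (if fw P + tw r + fw R = n then x * y else 0)" for i and x y :: nat
  proof -
    define c where "c = fw (take i P) + tw r"
    have "fw (take i P) + fw (drop i P) = fw P"
      by (metis append_take_drop_id fw_append)
    then have iff: "c \<in> {1..n} \<and> fw (drop i P) + fw R = n - c \<longleftrightarrow> fw P + tw r + fw R = n"
      using tw_pos[of r] by (auto simp: c_def)
    have "(\<Sum>a\<in>{1..n}. (if c = a then x else 0) *
        (if fw (drop i P) + fw R = n - a then y else 0)) =
      (\<Sum>a\<in>{1..n}. if a = c then x * (if fw (drop i P) + fw R = n - c then y else 0) else 0)"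
      by (rule sum.cong) auto
    then show ?thesis
      unfolding c_def[symmetric] using iff by (auto simp: sum.delta')
  qed
  have "(\<Sum>a\<in>{1..n}. \<Sum>i\<le>length P.
      count (tree_cuts fr a) (take i P, r) * count (forest_cuts fr False (n - a)) (drop i P, R)) =
    (\<Sum>i\<le>length P. \<Sum>a\<in>{1..n}.
      (if fw (take i P) + tw r = a then multichoose (tree_slots fr r) i else 0) *
      (if fw (drop i P) + fw R = n - a then multichoose (forest_slots fr False R) (length P - i) else 0))"
    by (subst sum.swap) (simp add: tree forest cong: if_cong)
  also have "\<dots> = (\<Sum>i\<le>length P. if fw P + tw r + fw R = n
      then multichoose (tree_slots fr r) i * multichoose (forest_slots fr False R) (length P - i) else 0)"
    by (simp only: collapse)
  also have "\<dots> = (if fw P + tw r + fw R = n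
      then multichoose (tree_slots fr r + forest_slots fr False R) (length P) else 0)"
    by (simp add: multichoose_Vandermonde)
  finally show ?thesis .
qed

lemma count_forest_cuts:
  "count (forest_cuts fr leftmost n) (P, R) =
    (if fw P + fw R = n then multichoose (forest_slots fr leftmost R) (length P) else 0)"
proof (induction n arbitrary: leftmost P R rule: less_induct)
  case (less n)
  show ?case
  proof (cases "n = 0")
    case True
    then show ?thesis by (auto simp: forest_cuts_0)
  next
    case False
    have whole: "(if fr \<and> leftmost then 0 else
       case P of [] \<Rightarrow> 0
       | p # P' \<Rightarrow> if tw p \<le> n then count (forest_cuts fr False (n - tw p)) (P', R) else 0) =
      (if fw P + fw R = n then
         if fr \<and> leftmost \<or> length P = 0 then 0
         else multichoose (forest_slots fr False R) (length P - 1)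
       else 0)"
    proof (cases P)
      case (Cons p P')
      have "n - tw p < n"
        using tw_pos[of p] False by simp
      with less.IH[of "n - tw p" False P' R] show ?thesis
        by (auto simp: Cons)
    qed simp
    have inside: "(case R of [] \<Rightarrow> 0
       | r # R' \<Rightarrow> \<Sum>a\<in>{1..n}. \<Sum>i\<le>length P.
           count (tree_cuts fr a) (take i P, r) * count (forest_cuts fr False (n - a)) (drop i P, R')) =
      (if fw P + fw R = n then
         case R of [] \<Rightarrow> 0
         | r # R' \<Rightarrow> multichoose (tree_slots fr r + forest_slots fr False R') (length P)
       else 0)"
      using sum_count_cuts_inside_first_tree[OF less.IH] by (auto simp: add.assoc split: list.split)
    show ?thesis
      unfolding count_forest_cuts_pos[OF \<open>n \<noteq> 0\<close>[unfolded neq0_conv]] whole inside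
      using multichoose_forest_slots_Cons[of "length P" R fr leftmost] False by auto
  qed
qed


lemma count_tree_cuts:
  "count (tree_cuts fr n) (Q, r) =
    (if fw Q + tw r = n then multichoose (tree_slots fr r) (length Q) else 0)"
proof (cases n)
  case 0
  then show ?thesis using tw_pos[of r] by (simp add: tree_cuts_0)
next
  case (Suc m)
  obtain F where "r = Node F" by (cases r)
  with Suc show ?thesis
    by (simp add: count_tree_cuts_Suc count_forest_cuts fw_def)
qed

section \<open>Evaluation of the coproducts\<close>

lemma sum_apply: "(\<Sum>i\<in>I. f i) x = (\<Sum>i\<in>I. f i x)"
  by (induction I rule: infinite_finite_induct) simp_all

lemma hprod_vv_apply: "hprod (map vv as) F = (if map tw F = as then 1 else 0)"
proof (induction as arbitrary: F)
  case Nil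
  then show ?case by (simp add: hprod_def basis_def)
next
  case (Cons a as)
  have "vv a (take i F) * hprod (map vv as) (drop i F) =
      (if i = 1 then if map tw F = a # as then 1 else 0 else 0)" if "i \<le> length F" for i
    using that unfolding Cons.IH vv_def
    by (cases F; cases i) (auto simp flip: take_map drop_map)
  then have "hprod (map vv (a # as)) F =
      (\<Sum>i\<le>length F. if i = 1 then if map tw F = a # as then 1 else 0 else 0)"
    by (simp add: hprod_def hmult_def)
  also have "\<dots> = (if map tw F = a # as then 1 else 0)"
    by (cases F) (auto simp: sum.delta' Suc_le_eq)
  finally show ?case .
qed

lemma compsum_apply: "compsum k l F = (if length F = l \<and> fw F = k then 1 else 0)"
proof -
  define S where "S = {as. length as = l \<and> sum_list as = k \<and> (\<forall>a\<in>set as. 0 < a)}"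
  have "S \<subseteq> {as. set as \<subseteq> {0..k} \<and> length as = l}"
    by (auto simp: S_def member_le_sum_list)
  then have "finite S"
    by (rule finite_subset) (simp add: finite_lists_length_eq)
  moreover have "map tw F \<in> S \<longleftrightarrow> length F = l \<and> fw F = k"
    using tw_pos by (auto simp: S_def fw_def)
  ultimately show ?thesis
    unfolding compsum_def S_def[symmetric] sum_apply hprod_vv_apply
    by (simp add: sum.delta eq_commute[of _ "map tw F"])
qed

lemma sum_smult_tens_compsum_apply:
  "(\<Sum>k\<in>{1..n-1}. \<Sum>l\<in>{1..k}. smult (c k l) (tens (compsum k l) (y k))) (P, R) =
    (if P \<noteq> [] \<and> fw P < n then c (fw P) (length P) * y (fw P) R else 0)"
proof -
  have summand: "smult (c k l) (tens (compsum k l) (y k)) (P, R) =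
      (if l = length P then if k = fw P then c k l * y k R else 0 else 0)" for k l
    by (simp add: smult_def tens_def compsum_apply)
  have "length P \<in> {1..fw P} \<longleftrightarrow> P \<noteq> []"
    using length_le_fw[of P] by (cases P) auto
  then have "(\<Sum>l\<in>{1..k}. smult (c k l) (tens (compsum k l) (y k)) (P, R)) =
      (if k = fw P \<and> P \<noteq> [] then c (fw P) (length P) * y (fw P) R else 0)" for k
    by (cases "k = fw P") (simp_all add: summand sum.delta')
  then show ?thesis
    by (auto simp: sum_apply sum.delta' Suc_le_eq)
qed

lemma cop_vv_apply: "cop fr (vv n) (P, R) = of_nat (count (choices_of_weight fr False n) (P, R))"
proof -
  have support: "{F. vv n F \<noteq> 0} = (\<lambda>t. [t]) ` trees_of_weight n"
    by (auto simp: vv_def trees_of_weight_def)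
  have "fcop fr [t] = choices fr False t" for t
    by (simp add: fcop_def comp_def tcop_def choices_def split_def)
  then have "cop fr (vv n) (P, R) = (\<Sum>t\<in>trees_of_weight n. of_nat (count (mset (choices fr False t)) (P, R)))"
    unfolding cop_def support
    by (subst sum.reindex) (auto simp: inj_on_def vv_def trees_of_weight_def count_mset)
  then show ?thesis
    by (simp add: choices_of_weight_def count_sum)
qed

lemma cop_uu_apply: "cop fr (uu n) (P, R) = of_nat (count (forest_cuts fr False n) (P, R))"
proof -
  have "{F. uu n F \<noteq> 0} = forests_of_weight n"
    by (auto simp: uu_def forests_of_weight_def)
  then show ?thesis
    unfolding cop_def forest_cuts_def count_sum of_nat_sum
    by (intro sum.cong) (simp_all add: uu_def forests_of_weight_def fcop_eq flip: count_mset)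
qed


lemma count_image_mset_singleton_fst:
  "count (image_mset (\<lambda>s. ([s], [])) M) (P, R) =
    (case P of [p] \<Rightarrow> if R = [] then count M p else 0 | _ \<Rightarrow> 0)"
  by (induction M) (auto split: list.split)

lemma count_image_mset_singleton_snd:
  "count (image_mset (\<lambda>(Q, r). (Q, [r])) A) (P, R) = (case R of [r] \<Rightarrow> count A (P, r) | _ \<Rightarrow> 0)"
  by (induction A) (auto split: list.split)

lemma rcop_vv:
  "rcop fr (vv n) =
    (\<Sum>k\<in>{1..n-1}. \<Sum>l\<in>{1..k}.
      smult (of_nat (multichoose (if fr then n - k - 1 else 2 * (n - k) - 1) l))
        (tens (compsum k l) (vv (n - k))))" (is "_ = ?rhs")
proof (intro ext, clarify)
  fix P R
  have count: "count (choices_of_weight fr False n) (P, R) =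
      (case P of [p] \<Rightarrow> if R = [] \<and> tw p = n then 1 else 0 | _ \<Rightarrow> 0) +
      (case R of [r] \<Rightarrow> if fw P + tw r = n then multichoose (tree_slots fr r) (length P) else 0
       | _ \<Rightarrow> 0)"
    by (simp add: choices_of_weight_eq count_image_mset_singleton_fst count_image_mset_singleton_snd
        count_tree_cuts finite_trees_of_weight count_mset_set' split: list.split)
       (auto simp: trees_of_weight_def split: list.split)
  have "rcop fr (vv n) (P, R) =
      of_nat (count (choices_of_weight fr False n) (P, R)) - vv n P * basis [] R - basis [] P * vv n R"
    by (simp add: rcop_def tens_def cop_vv_apply)
  also have "\<dots> =
      (case R of [r] \<Rightarrow> if P \<noteq> [] \<and> fw P + tw r = n
         then of_nat (multichoose (tree_slots fr r) (length P)) else 0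
       | _ \<Rightarrow> 0)"
    unfolding count by (cases R rule: remdups_adj.cases) (auto simp: basis_def vv_def split: list.split)
  finally show "rcop fr (vv n) (P, R) = ?rhs (P, R)"
    unfolding sum_smult_tens_compsum_apply
    by (auto simp: vv_def tree_slots_eq less_imp_neq[OF tw_pos, symmetric] split: list.split)
qed

lemma rcop_uu:
  assumes "1 \<le> n"
  shows "rcop fr (uu n) =
    (\<Sum>k\<in>{1..n-1}. \<Sum>l\<in>{1..k}.
      smult (of_nat (multichoose (if fr then n - k + 1 else 2 * (n - k) + 1) l))
        (tens (compsum k l) (uu (n - k))))" (is "_ = ?rhs")
proof (intro ext, clarify)
  fix P R
  have "rcop fr (uu n) (P, R) =
      of_nat (count (forest_cuts fr False n) (P, R)) - uu n P * basis [] R - basis [] P * uu n R"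
    by (simp add: rcop_def tens_def cop_uu_apply)
  also have "\<dots> =
      (if P \<noteq> [] \<and> R \<noteq> [] \<and> fw P + fw R = n
       then of_nat (multichoose (forest_slots fr False R) (length P)) else 0)"
    using assms by (auto simp: basis_def uu_def count_forest_cuts forest_slots_Nil)
  finally show "rcop fr (uu n) (P, R) = ?rhs (P, R)"
    unfolding sum_smult_tens_compsum_apply
    using fw_pos_iff[of R] by (auto simp: uu_def forest_slots_def simp del: fw_pos_iff)
qed

theorem mainTheorem9:
  fixes n :: nat
  assumes "1 \<le> n"
  shows "rcop False (vv n) =
           (\<Sum>k\<in>{1..n-1}. \<Sum>l\<in>{1..k}.
              smult (of_nat ((2*n - 2*k + l - 2) choose l)) (tens (compsum k l) (vv (n - k))))
       \<and> rcop True (vv n) =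
           (\<Sum>k\<in>{1..n-1}. \<Sum>l\<in>{1..k}.
              smult (of_nat ((n - k + l - 2) choose l)) (tens (compsum k l) (vv (n - k))))
       \<and> rcop False (uu n) =
           (\<Sum>k\<in>{1..n-1}. \<Sum>l\<in>{1..k}.
              smult (of_nat ((2*n - 2*k + l) choose l)) (tens (compsum k l) (uu (n - k))))
       \<and> rcop True (uu n) =
           (\<Sum>k\<in>{1..n-1}. \<Sum>l\<in>{1..k}.
              smult (of_nat ((n - k + l) choose l)) (tens (compsum k l) (uu (n - k))))"
proof -
  have coefficients:
    "multichoose (2 * (n - k) - 1) l = (2*n - 2*k + l - 2) choose l"
    "multichoose (n - k - 1) l = (n - k + l - 2) choose l"
    "multichoose (2 * (n - k) + 1) l = (2*n - 2*k + l) choose l"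
    "multichoose (n - k + 1) l = (n - k + l) choose l"
    if "k \<in> {1..n-1}" "l \<in> {1..k}" for k l
    using that unfolding multichoose_def by (auto intro!: arg_cong[where f = "\<lambda>m. m choose l"])
  show ?thesis
    unfolding rcop_vv rcop_uu[OF \<open>1 \<le> n\<close>] if_True if_False
    by (intro conjI sum.cong refl) (simp_all only: coefficients)
qed

end
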